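(* Let $\Omega>0$, let $0<\sigma\leq m_{\min}$ and let $n\geq 2$ be an integer. Then there exist a positive discrete measure $\mu=\sum_{j=1}^{n}a_j\delta_{y_j}$ on $\mathbb R$ with $n$ distinct supports $y_1,\dots,y_n\in\mathbb R$ and amplitudes $a_j>0$, and a positive discrete measure $\hat \mu=\sum_{j=1}^{n-1}\hat a_j \delta_{\hat y_j}$ with $n-1$ supports $\hat y_j\in\mathbb R$ and amplitudes $\hat a_j>0$, such that \[ \max_{\omega\in[-\Omega,\Omega]}\big|\mathcal F[\hat \mu](\omega)-\mathcal F [\mu](\omega)\big|< \sigma, \] and moreover \[ \min_{1\leq j\leq n}|a_j|= m_{\min}, \qquad \min_{p\neq j}|y_p-y_j|= \frac{2e^{-1}}{\Omega}\Big(\frac{\sigma}{m_{\min}}\Big)^{\frac{1}{2n-2}}. \]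
   Context: For a discrete measure $\nu=\sum_{j} c_j\delta_{x_j}$ on $\mathbb R$, its Fourier transform is $\mathcal F[\nu](\omega)=\sum_j c_j e^{i x_j\omega}$, $\omega\in\mathbb R$. Here $\Omega>0$ is the cutoff frequency, $\sigma>0$ the noise level and $m_{\min}>0$ a prescribed minimal amplitude. *)

theory Defs
  imports "HOL-Analysis.Analysis"
begin

text \<open>A discrete measure sum_{j<k} c_j delta_{x_j} is represented by amplitude and
support functions on the index set {0..<k}. Its Fourier transform:\<close>

definition fourier_discrete :: "nat \<Rightarrow> (nat \<Rightarrow> real) \<Rightarrow> (nat \<Rightarrow> real) \<Rightarrow> real \<Rightarrow> complex" where
  "fourier_discrete k c x \<omega> = (\<Sum>j<k. complex_of_real (c j) * exp (\<i> * complex_of_real (x j * \<omega>)))"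

end

theory Submission
  imports Defs
begin

text \<open>The signed measure \<open>\<Sum>\<^sub>k (-1)^k C(2M,k) \<delta>(k h/2)\<close>, the \<open>2M\<close>-th finite difference
  of \<open>\<delta>(0)\<close> with step \<open>h/2\<close>, has Fourier transform \<open>(1 - exp(i h \<omega>/2))^(2M)\<close>, which is at most
  \<open>(h \<Omega>/2)^(2M)\<close> on \<open>[-\<Omega>,\<Omega>]\<close>. Its positive part (even \<open>k\<close>) has \<open>M+1\<close> atoms with separation
  \<open>h\<close> and smallest weight \<open>1\<close>; its negative part (odd \<open>k\<close>) has \<open>M\<close> atoms. After scaling by
  \<open>m_min\<close>, the choice \<open>h = 2 exp(-1)/\<Omega> (\<sigma>/m_min)^(1/(2M))\<close> makes the two parts
  \<open>exp(-2M) \<sigma>\<close>-close in Fourier norm on \<open>[-\<Omega>,\<Omega>]\<close>.\<close>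

lemma fourier_discrete_uminus:
  "fourier_discrete k (\<lambda>j. - c j) x \<omega> = - fourier_discrete k c x \<omega>"
  by (simp add: fourier_discrete_def sum_negf)

lemma fourier_discrete_split_even_odd:
  "fourier_discrete (Suc (2 * M)) c x \<omega> =
     fourier_discrete (Suc M) (\<lambda>j. c (2 * j)) (\<lambda>j. x (2 * j)) \<omega>
     + fourier_discrete M (\<lambda>j. c (2 * j + 1)) (\<lambda>j. x (2 * j + 1)) \<omega>"
  unfolding fourier_discrete_def by (induction M) (simp_all add: algebra_simps)

lemma exp_i_of_nat_mult: "exp (\<i> * of_real (real k * t)) = exp (\<i> * of_real t) ^ k"
proof -
  have "\<i> * of_real (real k * t) = of_nat k * (\<i> * of_real t)" by simp
  then show ?thesis by (simp only: exp_of_nat_mult)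
qed

lemma fourier_discrete_alternating_binomial:
  "fourier_discrete (Suc N) (\<lambda>k. m * (-1) ^ k * real (N choose k)) (\<lambda>k. real k * t) \<omega>
     = of_real m * (1 - exp (\<i> * of_real (t * \<omega>))) ^ N"
proof -
  define z where "z = exp (\<i> * of_real (t * \<omega>))"
  have "fourier_discrete (Suc N) (\<lambda>k. m * (-1) ^ k * real (N choose k)) (\<lambda>k. real k * t) \<omega>
        = (\<Sum>k\<le>N. of_real m * (of_nat (N choose k) * (- z) ^ k))"
    unfolding fourier_discrete_def lessThan_Suc_atMost mult.assoc[of "real _" t \<omega>]
      exp_i_of_nat_mult z_def[symmetric] power_minus[of z]
    \<comment> \<open>\<open>power_minus\<close> must be instantiated: unrestricted, it loops on \<open>(-1)^k\<close>\<close>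
    by (intro sum.cong refl) (simp add: mult_ac)
  also have "\<dots> = of_real m * (1 - z) ^ N"
    using binomial_ring[of "- z" 1 N] by (simp add: sum_distrib_left mult.commute)
  finally show ?thesis unfolding z_def .
qed

lemma fourier_discrete_binomial_pair_diff:
  "fourier_discrete (Suc M) (\<lambda>j. m * real (2 * M choose (2 * j))) (\<lambda>j. real j * h) \<omega>
   - fourier_discrete M (\<lambda>j. m * real (2 * M choose (2 * j + 1))) (\<lambda>j. (real j + 1 / 2) * h) \<omega>
   = of_real m * (1 - exp (\<i> * of_real (h * \<omega> / 2))) ^ (2 * M)"
proof -
  have "(\<lambda>j. m * (-1) ^ (2 * j + 1) * real (2 * M choose (2 * j + 1)))
        = (\<lambda>j. - (m * real (2 * M choose (2 * j + 1))))"
    and "(\<lambda>j. m * (-1) ^ (2 * j) * real (2 * M choose (2 * j)))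
        = (\<lambda>j. m * real (2 * M choose (2 * j)))"
    by simp_all
  moreover have "(\<lambda>j. real (2 * j + 1) * (h / 2)) = (\<lambda>j. (real j + 1 / 2) * h)"
    and "(\<lambda>j. real (2 * j) * (h / 2)) = (\<lambda>j. real j * h)"
    by (auto simp: field_simps)
  ultimately show ?thesis
    using fourier_discrete_alternating_binomial[of "2 * M" m "h / 2" \<omega>,
        unfolded fourier_discrete_split_even_odd]
    by (simp only: fourier_discrete_uminus mult.assoc) simp
qed

lemma norm_one_minus_exp_i_le: "norm (1 - exp (\<i> * of_real t)) \<le> \<bar>t\<bar>"
  using dist_exp_i_1[of t] abs_sin_x_le_abs_x[of "t / 2"] by (simp add: norm_minus_commute)

lemma SUP_norm_fourier_binomial_pair_diff_le:
  assumes "\<Omega> \<ge> 0" "h \<ge> 0" "m \<ge> 0"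
  shows "(SUP \<omega>\<in>{-\<Omega>..\<Omega>}.
            cmod (fourier_discrete M (\<lambda>j. m * real (2 * M choose (2 * j + 1))) (\<lambda>j. (real j + 1 / 2) * h) \<omega>
                  - fourier_discrete (Suc M) (\<lambda>j. m * real (2 * M choose (2 * j))) (\<lambda>j. real j * h) \<omega>))
         \<le> m * (h * \<Omega> / 2) ^ (2 * M)"
proof (rule cSUP_least)
  show "{-\<Omega>..\<Omega>} \<noteq> {}" using assms(1) by simp
next
  fix \<omega> :: real assume "\<omega> \<in> {-\<Omega>..\<Omega>}"
  then have "\<bar>h * \<omega> / 2\<bar> \<le> h * \<Omega> / 2"
    using assms(2) by (auto simp: abs_mult intro: mult_left_mono)
  then have "norm (1 - exp (\<i> * of_real (h * \<omega> / 2))) \<le> h * \<Omega> / 2"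
    using norm_one_minus_exp_i_le order_trans by blast
  then have "m * norm (1 - exp (\<i> * of_real (h * \<omega> / 2))) ^ (2 * M) \<le> m * (h * \<Omega> / 2) ^ (2 * M)"
    using assms(3) by (intro mult_left_mono power_mono) auto
  then show "cmod (fourier_discrete M (\<lambda>j. m * real (2 * M choose (2 * j + 1))) (\<lambda>j. (real j + 1 / 2) * h) \<omega>
               - fourier_discrete (Suc M) (\<lambda>j. m * real (2 * M choose (2 * j))) (\<lambda>j. real j * h) \<omega>)
             \<le> m * (h * \<Omega> / 2) ^ (2 * M)"
    using assms(3)
    by (subst norm_minus_commute)
       (simp only: fourier_discrete_binomial_pair_diff norm_mult norm_power norm_of_real abs_of_nonneg)
qed

lemma Min_scaled_even_binomial:
  assumes "m > 0"
  shows "(MIN j\<in>{0..<Suc M}. \<bar>m * real (2 * M choose (2 * j))\<bar>) = m"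
proof (rule Min_eqI)
  show "m \<in> (\<lambda>j. \<bar>m * real (2 * M choose (2 * j))\<bar>) ` {0..<Suc M}"
    using assms by (auto intro!: image_eqI[of _ _ 0])
next
  fix x assume "x \<in> (\<lambda>j. \<bar>m * real (2 * M choose (2 * j))\<bar>) ` {0..<Suc M}"
  then obtain j where "j < Suc M" and x: "x = m * real (2 * M choose (2 * j))"
    using assms by auto
  then have "0 < 2 * M choose (2 * j)"
    by (intro zero_less_binomial) simp
  then have "1 \<le> real (2 * M choose (2 * j))"
    by linarith
  then show "m \<le> x" using assms x by simp
qed simp

lemma Min_dist_arith_progression:
  assumes "h > 0" "n \<ge> 2"
  shows "(MIN (p, j)\<in>{(p, j). p < n \<and> j < n \<and> p \<noteq> j}. \<bar>real p * h - real j * h\<bar>) = h"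
proof (rule Min_eqI)
  have "{(p, j). p < n \<and> j < n \<and> p \<noteq> j} \<subseteq> {..<n} \<times> {..<n}" by auto
  then have "finite {(p, j). p < n \<and> j < n \<and> p \<noteq> j}" by (rule finite_subset) simp
  then show "finite ((\<lambda>(p, j). \<bar>real p * h - real j * h\<bar>) ` {(p, j). p < n \<and> j < n \<and> p \<noteq> j})"
    by simp
  show "h \<in> (\<lambda>(p, j). \<bar>real p * h - real j * h\<bar>) ` {(p, j). p < n \<and> j < n \<and> p \<noteq> j}"
    using assms by (auto intro!: image_eqI[of _ _ "(1, 0)"])
next
  fix x assume "x \<in> (\<lambda>(p, j). \<bar>real p * h - real j * h\<bar>) ` {(p, j). p < n \<and> j < n \<and> p \<noteq> j}"
  then obtain p j :: nat where "p \<noteq> j" and x: "x = \<bar>real p - real j\<bar> * h"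
    using assms(1) by (auto simp: abs_mult left_diff_distrib[symmetric])
  then have "1 \<le> \<bar>real p - real j\<bar>" by linarith
  then show "h \<le> x" using assms(1) x mult_right_mono[of 1 _ h] by simp
qed

lemma power_exp_neg_one_mult_root_less:
  fixes s :: real
  assumes "s > 0" "N > 0"
  shows "(exp (-1) * s powr (1 / real N)) ^ N < s"
proof -
  have "(s powr (1 / real N)) ^ N = s"
    using assms by (subst root_powr_inverse[symmetric]) auto
  moreover have "exp (-1) ^ N < (1 :: real)"
    using assms(2) power_strict_decreasing[of 0 N "exp (-1) :: real"] by simp
  ultimately show ?thesis
    using assms(1) by (simp add: power_mult_distrib)
qed

theorem theorem2p2:
  fixes \<Omega> \<sigma> m_min :: real and n :: nat
  assumes "\<Omega> > 0" and "0 < \<sigma>" and "\<sigma> \<le> m_min" and "n \<ge> 2"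
  shows "\<exists>(a::nat \<Rightarrow> real) (y::nat \<Rightarrow> real) (ah::nat \<Rightarrow> real) (yh::nat \<Rightarrow> real).
           inj_on y {0..<n} \<and> (\<forall>j<n. a j > 0) \<and>
           inj_on yh {0..<n-1} \<and> (\<forall>j<n-1. ah j > 0) \<and>
           (SUP \<omega>\<in>{-\<Omega>..\<Omega>}. cmod (fourier_discrete (n-1) ah yh \<omega> - fourier_discrete n a y \<omega>)) < \<sigma> \<and>
           (MIN j\<in>{0..<n}. \<bar>a j\<bar>) = m_min \<and>
           (MIN (p, j)\<in>{(p, j). p < n \<and> j < n \<and> p \<noteq> j}. \<bar>y p - y j\<bar>)
             = 2 * exp (-1) / \<Omega> * (\<sigma> / m_min) powr (1 / (2 * real n - 2))"
proof -
  obtain M where n: "n = Suc M" and "M \<ge> 1" using assms(4) by (cases n) auto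
  then have exponent: "2 * real n - 2 = real (2 * M)" by simp
  have m_min: "m_min > 0" and s: "\<sigma> / m_min > 0" using assms(2,3) by auto
  define r where "r = (\<sigma> / m_min) powr (1 / real (2 * M))"
  define h where "h = 2 * exp (-1) / \<Omega> * r"
  have "h > 0" using assms(1,2) m_min by (simp add: h_def r_def)
  have "h * \<Omega> / 2 = exp (-1) * r" using assms(1) by (simp add: h_def)
  then have gap: "m_min * (h * \<Omega> / 2) ^ (2 * M) < \<sigma>"
    using power_exp_neg_one_mult_root_less[OF s, of "2 * M", folded r_def] \<open>M \<ge> 1\<close> m_min
    by (simp add: less_divide_eq mult.commute)
  define a where "a = (\<lambda>j. m_min * real (2 * M choose (2 * j)))"
  define y where "y = (\<lambda>j. real j * h)"
  define ah where "ah = (\<lambda>j. m_min * real (2 * M choose (2 * j + 1)))"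
  define yh where "yh = (\<lambda>j. (real j + 1 / 2) * h)"
  have "inj_on y {0..<n}" "inj_on yh {0..<n-1}"
    using \<open>h > 0\<close> by (auto simp: y_def yh_def inj_on_def)
  moreover have "\<forall>j<n. a j > 0" "\<forall>j<n-1. ah j > 0"
    using m_min by (auto simp: a_def ah_def n less_Suc_eq_le)
  moreover have "(SUP \<omega>\<in>{-\<Omega>..\<Omega>}. cmod (fourier_discrete (n-1) ah yh \<omega> - fourier_discrete n a y \<omega>)) < \<sigma>"
    unfolding n diff_Suc_1 a_def y_def ah_def yh_def
    using SUP_norm_fourier_binomial_pair_diff_le[of \<Omega> h m_min M] assms(1) \<open>h > 0\<close> m_min gap
    by linarith
  moreover have "(MIN j\<in>{0..<n}. \<bar>a j\<bar>) = m_min"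
    unfolding n a_def by (rule Min_scaled_even_binomial[OF m_min])
  moreover have "(MIN (p, j)\<in>{(p, j). p < n \<and> j < n \<and> p \<noteq> j}. \<bar>y p - y j\<bar>)
               = 2 * exp (-1) / \<Omega> * (\<sigma> / m_min) powr (1 / (2 * real n - 2))"
    unfolding y_def exponent
    by (simp only: r_def[symmetric] h_def[symmetric] Min_dist_arith_progression[OF \<open>h > 0\<close> assms(4)])
  ultimately show ?thesis by blast
qed

end
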